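(* For integers $n\ge 1$ let $\mu=\mu(n)=\frac{\pi}{6}\sqrt{24n-1}$ and \[ T(n)=\frac{\sqrt{12}}{24n-1}\left[\left(1-\frac{1}{\mu}\right)e^{\mu}+\frac{(-1)^n}{\sqrt2}e^{\mu/2}\right]. \] Let $T_1(n)=2\log T(n)-\log T(n-1)-\log T(n+1)$ and $C=\pi\sqrt{2/3}$. Then for all integers $n\ge 50$, \[ \frac{24\pi}{(24(n+1)-1)^{3/2}}-\frac{3}{n^2} < T_1(n) < \frac{24\pi}{(24(n-1)-1)^{3/2}}+e^{-C\sqrt n/10}. \]
   Context: $\log$ denotes the natural logarithm. *)

theory Defs
  imports Complex_Main
begin

definition mu :: "nat \<Rightarrow> real" where
  "mu n = pi / 6 * sqrt (24 * real n - 1)"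

definition T :: "nat \<Rightarrow> real" where
  "T n = sqrt 12 / (24 * real n - 1) *
     ((1 - 1 / mu n) * exp (mu n) + (-1) ^ n / sqrt 2 * exp (mu n / 2))"

definition T1 :: "nat \<Rightarrow> real" where
  "T1 n = 2 * ln (T n) - ln (T (n - 1)) - ln (T (n + 1))"

definition C :: real where
  "C = pi * sqrt (2 / 3)"

end

theory Submission
  imports Defs "HOL-Analysis.Complex_Transcendental"
begin

text \<open>
  Write \<open>T k = sqrt 12 / (24 k - 1) * (1 - 1 / mu k) * exp (mu k) * (1 + eps_T k)\<close>, where
  \<open>eps_T k = O(exp (- mu k / 2))\<close> is the relative size of the oscillating term. Then \<open>T1 n\<close>,
  the second difference \<open>2 f n - f (n - 1) - f (n + 1)\<close> of \<open>f = ln \<circ> T\<close>, splits into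
  five second differences. That of \<open>mu\<close> lies strictly between the two main terms, because
  \<open>2 q - p - r = 2 h\<^sup>2 / ((p + q) (q + r) (p + r))\<close> for \<open>p, q, r\<close> the square roots of
  \<open>a - h, a, a + h\<close> (here \<open>a = 24 n - 1, h = 24\<close>). Those of \<open>ln (24 k - 1)\<close> and \<open>ln (mu k)\<close> are exactly
  \<open>- ln (1 - rho n)\<close> and half of it, where \<open>rho n \<approx> 1 / n\<^sup>2\<close>; that of
  \<open>ln (mu k - 1)\<close> lies in \<open>[0, 3/2 rho n]\<close> by concavity, so these three together
  contribute between about \<open>- 3/2 rho n\<close> and \<open>0\<close>. The oscillating part is at most
  \<open>3.04 exp (- mu (n - 1) / 2)\<close>, which is below both \<open>0.48 / n\<^sup>2\<close> and
  \<open>exp (- C sqrt n / 10)\<close>.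
\<close>

lemma powr_three_halves: "0 \<le> x \<Longrightarrow> x powr (3/2) = sqrt x ^ 3" for x :: real
  by (simp add: powr_half_sqrt_powr[of x 3] real_sqrt_power powr_realpow')

lemma sqrt_second_difference_bounds:
  fixes a h :: real
  assumes "0 < h" "h < a"
  shows "h^2 / (4 * (a + h) powr (3/2)) < 2 * sqrt a - sqrt (a - h) - sqrt (a + h)
       \<and> 2 * sqrt a - sqrt (a - h) - sqrt (a + h) < h^2 / (4 * (a - h) powr (3/2))"
proof -
  define p q r where "p = sqrt (a - h)" and "q = sqrt a" and "r = sqrt (a + h)"
  have "0 < p" "p < q" "q < r"
    using assms by (simp_all add: p_def q_def r_def)
  have sq: "p^2 = a - h" "q^2 = a" "r^2 = a + h"
    using assms by (simp_all add: p_def q_def r_def)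
  define P where "P = (p + q) * (q + r) * (p + r)"
  have "(2*q - p - r) * P = ((q^2 - p^2) * (q + r) - (r^2 - q^2) * (p + q)) * (p + r)"
    by (simp add: P_def algebra_simps power2_eq_square)
  also have "\<dots> = h * (r - p) * (p + r)"
    unfolding sq by (simp add: algebra_simps)
  also have "\<dots> = h * (r^2 - p^2)"
    by (simp add: algebra_simps power2_eq_square)
  also have "\<dots> = 2 * h^2"
    unfolding sq by (simp add: power2_eq_square)
  finally have "(2*q - p - r) * P = 2 * h^2" .
  moreover have "P > 0"
    using \<open>0 < p\<close> \<open>p < q\<close> \<open>q < r\<close> by (simp add: P_def)
  ultimately have key: "2*q - p - r = 2 * h^2 / P"
    by (simp add: eq_divide_eq)
  have "(2*p) * (2*p) * (2*p) < P" "P < (2*r) * (2*r) * (2*r)"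
    using \<open>0 < p\<close> \<open>p < q\<close> \<open>q < r\<close> unfolding P_def by (intro mult_strict_mono; simp)+
  then have "h^2 / (4 * r^3) < 2 * h^2 / P" "2 * h^2 / P < h^2 / (4 * p^3)"
    using \<open>0 < p\<close> \<open>P > 0\<close> assms by (simp_all add: field_simps power3_eq_cube)
  moreover have "(a + h) powr (3/2) = r^3" "(a - h) powr (3/2) = p^3"
    using assms by (simp_all add: powr_three_halves p_def r_def)
  ultimately show ?thesis
    using key by (simp add: p_def q_def r_def)
qed

lemma exp_ge_scaled_power:
  fixes c y :: real
  assumes "0 < k" "real k \<le> c" "c \<le> y"
  shows "exp c * (y / c) ^ k \<le> exp y"
proof -
  have "0 \<le> (c - k) * (y - c)"
    using assms by simp
  then have "y / c \<le> 1 + (y - c) / k"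
    using assms by (simp add: field_simps)
  also have "\<dots> \<le> exp ((y - c) / k)"
    by (rule exp_ge_add_one_self)
  finally have "(y / c) ^ k \<le> exp ((y - c) / k) ^ k"
    using assms by (intro power_mono) auto
  also have "\<dots> = exp (y - c)"
    using assms by (simp add: exp_of_nat_mult[symmetric])
  finally show ?thesis
    by (simp add: exp_diff field_simps)
qed

lemma exp_89_tenths_ge: "5500 \<le> exp (89/10 :: real)"
proof -
  have "(1247/1000) ^ 40 \<le> exp (89/400 :: real) ^ 40"
  proof (intro power_mono)
    have "1 + 89/400 + (89/400)^2/2 \<le> exp (89/400 :: real)"
      by (rule exp_lower_Taylor_quadratic) simp
    then show "1247/1000 \<le> exp (89/400 :: real)"
      by (simp add: power2_eq_square)
  qed simp
  also have "\<dots> = exp (89/10)"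
    by (simp add: exp_of_nat_mult[symmetric])
  finally show ?thesis
    by (simp add: power_divide)
qed

lemma ln_add_ln_le_double_ln:
  fixes u v w :: real
  assumes "0 < u" "0 < w" "u + w \<le> 2 * v"
  shows "ln u + ln w \<le> 2 * ln v"
proof -
  have "u * w \<le> ((u + w) / 2)^2"
    using sum_squares_ge_zero[of "u - w" 0] by (simp add: power2_eq_square field_simps)
  also have "\<dots> \<le> v^2"
    using assms by (intro power_mono) auto
  finally have "ln (u * w) \<le> ln (v^2)"
    using assms by simp
  then show ?thesis
    using assms by (simp add: ln_mult ln_realpow)
qed

definition second_diff :: "(nat \<Rightarrow> real) \<Rightarrow> nat \<Rightarrow> real" where
  "second_diff f n = 2 * f n - f (n - 1) - f (n + 1)"

text \<open>\<open>(24 n - 25) (24 n + 23) = (24 n - 1)\<^sup>2 (1 - rho n)\<close>.\<close>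

definition rho :: "nat \<Rightarrow> real" where
  "rho n = 576 / (24 * real n - 1)^2"

lemma mu_pred: "1 \<le> n \<Longrightarrow> mu (n - 1) = pi / 6 * sqrt (24 * real n - 1 - 24)"
  by (simp add: mu_def of_nat_diff algebra_simps)

lemma mu_Suc: "mu (n + 1) = pi / 6 * sqrt (24 * real n - 1 + 24)"
  by (simp add: mu_def algebra_simps)

lemma mu_mono: "k \<le> l \<Longrightarrow> mu k \<le> mu l"
  by (simp add: mu_def)

lemma mu_ge:
  shows "49 \<le> k \<Longrightarrow> 178/10 \<le> mu k"
    and "50 \<le> k \<Longrightarrow> 18 \<le> mu k"
proof -
  have pi: "314/100 \<le> pi"
    using pi_approx(1) by simp
  have "342/10 \<le> sqrt (1175 :: real)" "346/10 \<le> sqrt (1199 :: real)"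
    by (rule real_le_rsqrt; simp add: power2_eq_square)+
  then have "314/100 / 6 * (342/10) \<le> pi / 6 * sqrt (1175 :: real)"
    "314/100 / 6 * (346/10) \<le> pi / 6 * sqrt (1199 :: real)"
    using pi by (intro mult_mono; simp)+
  then have "178/10 \<le> mu 49" "18 \<le> mu 50"
    by (simp_all add: mu_def)
  then show "49 \<le> k \<Longrightarrow> 178/10 \<le> mu k" "50 \<le> k \<Longrightarrow> 18 \<le> mu k"
    using mu_mono by (meson order.trans)+
qed

lemma ln_mu: "1 \<le> k \<Longrightarrow> ln (mu k) = ln (pi / 6) + ln (24 * real k - 1) / 2"
  unfolding mu_def by (subst ln_mult) (auto simp: ln_sqrt)

lemma rho_le: "50 \<le> n \<Longrightarrow> rho n \<le> 1002/1000 / (real n)^2"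
proof -
  assume n: "50 \<le> n"
  then have "(2398/100 * real n)^2 \<le> (24 * real n - 1)^2"
    by (intro power_mono) auto
  then have "576 / (24 * real n - 1)^2 \<le> 576 / (2398/100 * real n)^2"
    using n by (intro divide_left_mono) auto
  also have "\<dots> \<le> 1002/1000 / (real n)^2"
    using n by (simp add: field_simps power2_eq_square)
  finally show ?thesis
    by (simp add: rho_def)
qed

lemma rho_le_inverse_1000: "50 \<le> n \<Longrightarrow> rho n \<le> 1/1000"
proof -
  assume n: "50 \<le> n"
  then have "(50::real)^2 \<le> (real n)^2"
    by (intro power_mono) auto
  then have "1002/1000 / (real n)^2 \<le> 1002/1000 / 50^2"
    using n by (intro divide_left_mono) auto
  then show ?thesis
    using rho_le[OF n] by simp
qed

lemma second_diff_mu_bounds: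
  assumes "2 \<le> n"
  shows "24 * pi / (24 * (real n + 1) - 1) powr (3/2) < second_diff mu n
       \<and> second_diff mu n < 24 * pi / (24 * (real n - 1) - 1) powr (3/2)"
proof -
  define a where "a = 24 * real n - 1"
  have "24 < a"
    using assms by (simp add: a_def)
  then have "24^2 / (4 * (a + 24) powr (3/2)) < 2 * sqrt a - sqrt (a - 24) - sqrt (a + 24)
       \<and> 2 * sqrt a - sqrt (a - 24) - sqrt (a + 24) < 24^2 / (4 * (a - 24) powr (3/2))"
    by (intro sqrt_second_difference_bounds) auto
  moreover have "pi / 6 * (24^2 / (4 * X)) = 24 * pi / X" for X :: real
    by simp
  moreover have "second_diff mu n = pi / 6 * (2 * sqrt a - sqrt (a - 24) - sqrt (a + 24))"
    using assms by (simp add: second_diff_def mu_pred mu_Suc a_def mu_def algebra_simps)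
  moreover have "24 * (real n + 1) - 1 = a + 24" "24 * (real n - 1) - 1 = a - 24"
    by (simp_all add: a_def algebra_simps)
  ultimately show ?thesis
    using pi_gt_zero by (metis mult_strict_left_mono divide_pos_pos zero_less_numeral)
qed

lemma second_diff_ln_linear:
  assumes "2 \<le> n"
  shows "second_diff (\<lambda>k. ln (24 * real k - 1)) n = - ln (1 - rho n)"
proof -
  define a where "a = 24 * real n - 1"
  have "24 < a"
    using assms by (simp add: a_def)
  have "rho n = 576 / a^2"
    by (simp add: rho_def a_def)
  then have "1 - rho n = (a - 24) * (a + 24) / a^2"
    using \<open>24 < a\<close> by (simp add: field_simps power2_eq_square)
  also have "ln \<dots> = ln (a - 24) + ln (a + 24) - 2 * ln a"
    using \<open>24 < a\<close> by (simp add: ln_mult ln_div ln_realpow)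
  finally show ?thesis
    using assms by (simp add: second_diff_def a_def of_nat_diff algebra_simps)
qed

lemma second_diff_ln_mu:
  assumes "2 \<le> n"
  shows "second_diff (\<lambda>k. ln (mu k)) n = - ln (1 - rho n) / 2"
proof -
  have "second_diff (\<lambda>k. ln (mu k)) n = second_diff (\<lambda>k. ln (24 * real k - 1)) n / 2"
    using assms by (simp add: second_diff_def ln_mu)
  then show ?thesis
    using second_diff_ln_linear[OF assms] by simp
qed

lemma mu_prod_ge:
  assumes "2 \<le> n"
  shows "(mu n)^2 * (1 - rho n) \<le> mu (n - 1) * mu (n + 1)"
proof -
  define a where "a = 24 * real n - 1"
  define x where "x = (a - 24) * (a + 24)"
  have "24 < a"
    using assms by (simp add: a_def)
  have "0 \<le> x" "x \<le> a^2"
    using \<open>24 < a\<close> mult_mono[of 24 a 24 a] by (simp_all add: x_def power2_eq_square algebra_simps)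
  then have "sqrt x \<le> a"
    using \<open>24 < a\<close> real_sqrt_le_mono[of x "a^2"] by simp
  then have "sqrt x * sqrt x \<le> a * sqrt x"
    by (rule mult_right_mono) (simp add: \<open>0 \<le> x\<close>)
  then have "x / a \<le> sqrt x"
    using \<open>0 \<le> x\<close> \<open>24 < a\<close> by (simp add: divide_le_eq mult.commute)
  moreover have "mu n = pi / 6 * sqrt a" "rho n = 576 / a^2"
    by (simp_all add: mu_def rho_def a_def)
  then have "(mu n)^2 * (1 - rho n) = (pi / 6)^2 * (x / a)"
    using \<open>24 < a\<close> by (simp only:) (simp add: x_def field_simps power2_eq_square)
  moreover have "mu (n - 1) = pi / 6 * sqrt (a - 24)" "mu (n + 1) = pi / 6 * sqrt (a + 24)"
    using assms mu_pred[of n] mu_Suc[of n] by (simp_all add: a_def)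
  then have "mu (n - 1) * mu (n + 1) = (pi / 6)^2 * sqrt x"
    by (simp only:) (simp add: x_def real_sqrt_mult power2_eq_square)
  ultimately show ?thesis
    by (metis mult_left_mono zero_le_power2)
qed

lemma ln_minus_one_second_diff_bounds:
  fixes u v w t :: real
  assumes "1 < u" "1 < w" "18 \<le> v" "u + w \<le> 2 * v" "v^2 * (1 - t) \<le> u * w"
    and "0 \<le> t" "t \<le> 1/1000"
  shows "0 \<le> 2 * ln (v - 1) - ln (u - 1) - ln (w - 1)
       \<and> 2 * ln (v - 1) - ln (u - 1) - ln (w - 1) \<le> 3/2 * t"
proof
  show "0 \<le> 2 * ln (v - 1) - ln (u - 1) - ln (w - 1)"
    using ln_add_ln_le_double_ln[of "u - 1" "w - 1" "v - 1"] assms by simp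
  define s where "s = v^2 * t / (v - 1)^2"
  have "v / (v - 1) \<le> 18/17"
    using assms by (simp add: field_simps)
  then have "(v / (v - 1))^2 * t \<le> (18/17)^2 * t"
    using assms by (intro mult_right_mono power_mono) auto
  then have s_le: "s \<le> 324/289 * t"
    by (simp add: s_def power_divide power2_eq_square)
  have "0 \<le> s"
    using assms by (simp add: s_def)
  have "(v - 1)^2 * s = v^2 * t"
    using assms by (simp add: s_def)
  then have "(v - 1)^2 * (1 - s) = v^2 * (1 - t) - 2 * v + 1"
    by (simp add: algebra_simps power2_eq_square)
  also have "\<dots> \<le> (u - 1) * (w - 1)"
    using assms by (simp add: algebra_simps)
  finally have "ln ((v - 1)^2 * (1 - s)) \<le> ln ((u - 1) * (w - 1))"
    using assms s_le by (subst ln_le_cancel_iff) auto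
  then have "2 * ln (v - 1) - ln (u - 1) - ln (w - 1) \<le> - ln (1 - s)"
    using assms s_le by (simp add: ln_mult ln_realpow)
  also have "\<dots> \<le> s + 2 * s^2"
    using ln_one_minus_pos_lower_bound[of s] \<open>0 \<le> s\<close> s_le assms by simp
  also have "\<dots> \<le> 3/2 * t"
    using \<open>0 \<le> s\<close> s_le assms mult_mono[of s "324/289 * t" s "324/289 * t"]
      mult_right_mono[of t "1/1000" t]
    by (simp add: power2_eq_square)
  finally show "2 * ln (v - 1) - ln (u - 1) - ln (w - 1) \<le> 3/2 * t" .
qed

lemma second_diff_ln_mu_minus_one_bounds:
  assumes "50 \<le> n"
  shows "0 \<le> second_diff (\<lambda>k. ln (mu k - 1)) n
       \<and> second_diff (\<lambda>k. ln (mu k - 1)) n \<le> 3/2 * rho n"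
proof -
  have "0 < 24 * pi / (24 * (real n + 1) - 1) powr (3/2)"
    by simp
  then have "0 < second_diff mu n"
    using second_diff_mu_bounds[of n] assms by linarith
  then have "mu (n - 1) + mu (n + 1) \<le> 2 * mu n"
    by (simp add: second_diff_def)
  moreover have "rho n \<le> 1/1000"
    using assms by (rule rho_le_inverse_1000)
  moreover have "0 \<le> rho n"
    by (simp add: rho_def)
  moreover have "178/10 \<le> mu (n - 1)" "18 \<le> mu n" "18 \<le> mu (n + 1)"
    using assms mu_ge(1)[of "n - 1"] mu_ge(2)[of n] mu_ge(2)[of "n + 1"] by simp_all
  ultimately show ?thesis
    using ln_minus_one_second_diff_bounds[of "mu (n - 1)" "mu (n + 1)" "mu n" "rho n"]
      mu_prod_ge[of n] assms by (simp add: second_diff_def)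
qed

definition eps_T :: "nat \<Rightarrow> real" where
  "eps_T k = (-1)^k * exp (- mu k / 2) * mu k / (sqrt 2 * (mu k - 1))"

lemma T_eq_eps_T:
  assumes "1 < mu k"
  shows "T k = sqrt 12 / (24 * real k - 1) * exp (mu k) * ((mu k - 1) / mu k) * (1 + eps_T k)"
proof -
  have "exp (mu k) * exp (- mu k / 2) = exp (mu k / 2)"
    by (simp flip: exp_add)
  then have main: "exp (mu k) * ((mu k - 1) / mu k) * (1 + eps_T k)
      = (1 - 1 / mu k) * exp (mu k) + (-1) ^ k / sqrt 2 * exp (mu k / 2)"
    using assms unfolding eps_T_def by (simp add: field_simps)
  show ?thesis
    unfolding T_def main[symmetric] by (simp only: mult.assoc)
qed

lemma ln_T:
  assumes "1 \<le> k" "1 < mu k" "\<bar>eps_T k\<bar> < 1"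
  shows "ln (T k) = ln (sqrt 12) - ln (24 * real k - 1) + mu k + ln (mu k - 1) - ln (mu k)
                    + ln (1 + eps_T k)"
proof -
  have "0 < 1 + eps_T k"
    using assms(3) by linarith
  then show ?thesis
    using assms by (simp add: T_eq_eps_T ln_mult ln_div)
qed

lemma abs_eps_T_le:
  assumes "178/10 \<le> m" "m \<le> mu k"
  shows "\<bar>eps_T k\<bar> \<le> 3/4 * exp (- m / 2)"
proof -
  have "1414/1000 \<le> sqrt (2 :: real)"
    by (rule real_le_rsqrt) (simp add: power2_eq_square)
  then have "mu k \<le> 3/4 * (sqrt 2 * (mu k - 1))"
    using assms mult_right_mono[of "1414/1000" "sqrt 2" "mu k - 1"] by simp
  then have "mu k / (sqrt 2 * (mu k - 1)) \<le> 3/4"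
    using assms by (simp add: divide_le_eq)
  moreover have "exp (- mu k / 2) \<le> exp (- m / 2)"
    using assms by simp
  moreover have "\<bar>eps_T k\<bar> = exp (- mu k / 2) * (mu k / (sqrt 2 * (mu k - 1)))"
    using assms by (simp add: eps_T_def abs_mult power_abs)
  ultimately show ?thesis
    using assms mult_mono[of "exp (- mu k / 2)" "exp (- m / 2)" "mu k / (sqrt 2 * (mu k - 1))" "3/4"]
    by (simp add: mult.commute)
qed

lemma exp_neg_half_le_inverse_5500:
  fixes m :: real
  assumes "178/10 \<le> m"
  shows "exp (- m / 2) \<le> 1/5500"
proof -
  have "exp (89/10) \<le> exp (m / 2)"
    using assms by simp
  then have "5500 \<le> exp (m / 2)"
    using exp_89_tenths_ge by linarith
  then show ?thesis
    by (simp add: exp_minus field_simps)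
qed

lemma abs_ln_one_plus_eps_T_le:
  assumes "178/10 \<le> m" "m \<le> mu k"
  shows "\<bar>ln (1 + eps_T k)\<bar> \<le> 76/100 * exp (- m / 2)"
proof -
  define E where "E = exp (- m / 2)"
  have E: "0 < E" "E \<le> 1/5500"
    using exp_neg_half_le_inverse_5500[OF assms(1)] by (simp_all add: E_def)
  have eps: "\<bar>eps_T k\<bar> \<le> 3/4 * E"
    unfolding E_def using assms by (rule abs_eps_T_le)
  then have "\<bar>ln (1 + eps_T k) - eps_T k\<bar> \<le> 2 * (eps_T k)^2"
    using E by (intro abs_ln_one_plus_x_minus_x_bound) auto
  then have "\<bar>ln (1 + eps_T k)\<bar> \<le> \<bar>eps_T k\<bar> + 2 * (eps_T k)^2"
    by linarith
  moreover have "(eps_T k)^2 \<le> (3/4 * E)^2"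
    using eps by (metis abs_ge_zero power2_abs power_mono)
  moreover have "E * E \<le> 1/5500 * E"
    using E by (intro mult_right_mono) auto
  ultimately show ?thesis
    using eps unfolding E_def[symmetric] by (simp add: power2_eq_square)
qed

lemma abs_second_diff_ln_one_plus_eps_T_le:
  assumes "50 \<le> n"
  shows "\<bar>second_diff (\<lambda>k. ln (1 + eps_T k)) n\<bar> \<le> 304/100 * exp (- mu (n - 1) / 2)"
proof -
  have m: "178/10 \<le> mu (n - 1)"
    using assms by (intro mu_ge) simp
  have "\<bar>ln (1 + eps_T k)\<bar> \<le> 76/100 * exp (- mu (n - 1) / 2)" if "n - 1 \<le> k" for k
    using m mu_mono[OF that] by (rule abs_ln_one_plus_eps_T_le)
  from this[of "n - 1"] this[of n] this[of "n + 1"] have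
      "\<bar>ln (1 + eps_T (n - 1))\<bar> \<le> 76/100 * exp (- mu (n - 1) / 2)"
      "\<bar>ln (1 + eps_T n)\<bar> \<le> 76/100 * exp (- mu (n - 1) / 2)"
      "\<bar>ln (1 + eps_T (n + 1))\<bar> \<le> 76/100 * exp (- mu (n - 1) / 2)"
    by simp_all
  then show ?thesis
    unfolding second_diff_def abs_le_iff by simp
qed

lemma T1_eq:
  assumes "50 \<le> n"
  shows "T1 n = second_diff mu n + second_diff (\<lambda>k. ln (mu k - 1)) n + 3/2 * ln (1 - rho n)
                + second_diff (\<lambda>k. ln (1 + eps_T k)) n"
proof -
  have ln_T': "ln (T k) = ln (sqrt 12) - ln (24 * real k - 1) + mu k + ln (mu k - 1) - ln (mu k)
                          + ln (1 + eps_T k)" if "49 \<le> k" for k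
  proof (rule ln_T)
    have "178/10 \<le> mu k"
      using that by (rule mu_ge)
    then show "1 < mu k" "\<bar>eps_T k\<bar> < 1"
      using abs_eps_T_le[of "mu k" k] exp_neg_half_le_inverse_5500[of "mu k"] by auto
  qed (use that in simp)
  have "T1 n = second_diff mu n + second_diff (\<lambda>k. ln (mu k - 1)) n
             - second_diff (\<lambda>k. ln (24 * real k - 1)) n - second_diff (\<lambda>k. ln (mu k)) n
             + second_diff (\<lambda>k. ln (1 + eps_T k)) n"
    using assms ln_T'[of "n - 1"] ln_T'[of n] ln_T'[of "n + 1"]
    by (simp add: T1_def second_diff_def)
  then show ?thesis
    using assms by (simp add: second_diff_ln_linear second_diff_ln_mu)
qed

lemma exp_neg_half_mu_pred_le:
  assumes "50 \<le> n"
  shows "exp (- mu (n - 1) / 2) \<le> 48/100 / (real n)^2"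
proof -
  define y where "y = mu (n - 1) / 2"
  have "89/10 \<le> y"
    using assms mu_ge(1)[of "n - 1"] by (simp add: y_def)
  have mu_pred_n: "mu (n - 1) = pi / 6 * sqrt (24 * real n - 1 - 24)"
    using assms by (intro mu_pred) simp
  have y2: "y^2 = pi^2 / 144 * (24 * real n - 25)"
    unfolding y_def mu_pred_n using assms by (simp add: power_mult_distrib power_divide)
  have "(314/100)^2 \<le> pi^2"
    using pi_approx(1) by (intro power_mono) auto
  then have "9859/1000 / 144 * (24 * real n - 25) \<le> pi^2 / 144 * (24 * real n - 25)"
    using assms by (intro mult_right_mono divide_right_mono) (auto simp: power2_eq_square)
  moreover have "16/10 * real n \<le> 9859/1000 / 144 * (24 * real n - 25)"
    using assms by simp
  ultimately have "16/10 * real n \<le> y^2"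
    unfolding y2 by (rule order.trans[rotated])
  from power_mono[OF this, of 2] have "64/25 * (real n)^2 \<le> y^4"
    by (simp add: power_mult_distrib power_divide flip: power_mult)
  have "5500 * (y / (89/10))^4 \<le> exp (89/10) * (y / (89/10))^4"
    using exp_89_tenths_ge by (rule mult_right_mono) simp
  also have "\<dots> \<le> exp y"
    using \<open>89/10 \<le> y\<close> by (intro exp_ge_scaled_power) auto
  finally have "21/10 * (real n)^2 \<le> exp y"
    using \<open>64/25 * (real n)^2 \<le> y^4\<close> exp_ge_zero[of y] by (simp add: power_divide; linarith)
  then show ?thesis
    using zero_le_power2[of "real n"] assms by (simp add: y_def exp_minus field_simps; linarith)
qed

lemma exp_neg_half_mu_pred_le_exp_C:
  assumes "50 \<le> n"
  shows "304/100 * exp (- mu (n - 1) / 2) \<le> exp (- C * sqrt (real n) / 10)"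
proof -
  have "sqrt (16 * real n) \<le> sqrt (24 * real n - 1 - 24)"
    using assms by simp
  moreover have mu_pred_n: "mu (n - 1) = pi / 6 * sqrt (24 * real n - 1 - 24)"
    using assms by (intro mu_pred) simp
  ultimately have "pi / 12 * (4 * sqrt (real n)) \<le> mu (n - 1) / 2"
    unfolding mu_pred_n by (simp add: real_sqrt_mult)
  moreover have "C \<le> pi"
    unfolding C_def by (simp add: mult_left_le)
  then have "C * sqrt (real n) \<le> pi * sqrt (real n)"
    by (simp add: mult_right_mono)
  moreover have "7 \<le> sqrt (real n)"
    using assms by (intro real_le_rsqrt) simp
  then have "3 * 7 \<le> pi * sqrt (real n)"
    using pi_gt3 by (intro mult_mono) auto
  ultimately have "4 \<le> mu (n - 1) / 2 - C * sqrt (real n) / 10"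
    by simp
  then have "1 + 4 \<le> exp (mu (n - 1) / 2 - C * sqrt (real n) / 10)"
    by (meson add_left_mono exp_ge_add_one_self order.trans)
  then have "exp (C * sqrt (real n) / 10) * 5
      \<le> exp (C * sqrt (real n) / 10) * exp (mu (n - 1) / 2 - C * sqrt (real n) / 10)"
    by (intro mult_left_mono) auto
  then have "5 * exp (C * sqrt (real n) / 10) \<le> exp (mu (n - 1) / 2)"
    by (simp flip: exp_add)
  then show ?thesis
    using exp_gt_zero[of "C * sqrt (real n) / 10"] by (simp add: exp_minus field_simps; linarith)
qed

lemma ln_one_minus_rho_bounds:
  assumes "50 \<le> n"
  shows "- (1005/1000) / (real n)^2 \<le> ln (1 - rho n) \<and> ln (1 - rho n) \<le> - rho n"
proof
  have rho: "0 \<le> rho n" "rho n \<le> 1/1000" "rho n \<le> 1002/1000 / (real n)^2"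
    using rho_le_inverse_1000[OF assms] rho_le[OF assms] by (simp_all add: rho_def)
  then show "ln (1 - rho n) \<le> - rho n"
    by (simp add: ln_one_minus_pos_upper_bound)
  have "rho n * rho n \<le> 1/1000 * rho n"
    using rho by (intro mult_right_mono) auto
  then have "rho n + 2 * (rho n)^2 \<le> 1002/1000 * rho n"
    by (simp add: power2_eq_square)
  also have "\<dots> \<le> 1002/1000 * (1002/1000 / (real n)^2)"
    using rho by (intro mult_left_mono) auto
  also have "\<dots> \<le> 1005/1000 / (real n)^2"
    using assms by (simp add: field_simps)
  finally show "- (1005/1000) / (real n)^2 \<le> ln (1 - rho n)"
    using ln_one_minus_pos_lower_bound[of "rho n"] rho by simp
qed

theorem lemma2p2:
  fixes n :: nat
  assumes "n \<ge> 50"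
  shows "24 * pi / (24 * (real n + 1) - 1) powr (3 / 2) - 3 / (real n)^2 < T1 n
       \<and> T1 n < 24 * pi / (24 * (real n - 1) - 1) powr (3 / 2) + exp (- C * sqrt (real n) / 10)"
proof -
  have "24 * pi / (24 * (real n + 1) - 1) powr (3/2) < second_diff mu n
       \<and> second_diff mu n < 24 * pi / (24 * (real n - 1) - 1) powr (3/2)"
    using assms by (intro second_diff_mu_bounds) simp
  moreover have "0 \<le> second_diff (\<lambda>k. ln (mu k - 1)) n
       \<and> second_diff (\<lambda>k. ln (mu k - 1)) n \<le> 3/2 * rho n"
    using assms by (rule second_diff_ln_mu_minus_one_bounds)
  moreover have "- (1005/1000) / (real n)^2 \<le> ln (1 - rho n) \<and> ln (1 - rho n) \<le> - rho n"
    using assms by (rule ln_one_minus_rho_bounds)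
  moreover have "\<bar>second_diff (\<lambda>k. ln (1 + eps_T k)) n\<bar> \<le> 304/100 * exp (- mu (n - 1) / 2)"
    using assms by (rule abs_second_diff_ln_one_plus_eps_T_le)
  moreover have "exp (- mu (n - 1) / 2) \<le> 48/100 / (real n)^2"
    using assms by (rule exp_neg_half_mu_pred_le)
  moreover have "304/100 * exp (- mu (n - 1) / 2) \<le> exp (- C * sqrt (real n) / 10)"
    using assms by (rule exp_neg_half_mu_pred_le_exp_C)
  moreover have "0 < 1 / (real n)^2"
    using assms by simp
  ultimately show ?thesis
    unfolding T1_eq[OF assms] abs_le_iff by (intro conjI; linarith)
qed

end
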